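(* Let $d\sigma^2$ be a smooth positive semi-definite metric on a $2$-manifold $M^2$, let $p$ be a singular point of $d\sigma^2$ at which the null space $\mathcal{N}_p$ is one-dimensional, and let $(u,v)$ be a local coordinate system centered at $p$, with $d\sigma^2=E\,du^2+2F\,du\,dv+G\,dv^2$. If $p$ is admissible and $(u,v)$ is adjusted at $p$, then $F=G=0$, $E_v=2F_u$, $G_u=G_v=0$ hold at $p=(0,0)$. Conversely, if there exists a local coordinate system $(u,v)$ centered at $p$ satisfying these identities at $(0,0)$, then $p$ is an admissible singular point and $(u,v)$ is adjusted at $p$.
   Context: Write $\langle X,Y\rangle=d\sigma^2(X,Y)$. A point is singular if $d\sigma^2$ is not positive definite there. The null space at $p$ is $\mathcal{N}_p=\{v\in T_pM^2: d\sigma^2(v,w)=0\ \forall w\in T_pM^2\}$. The Kossowski pseudo-connection is $\Gamma(X,Y,Z)=\tfrac12\bigl(X\langle Y,Z\rangle+Y\langle X,Z\rangle-Z\langle X,Y\rangle+\langle[X,Y],Z\rangle-\langle[X,Z],Y\rangle-\langle[Y,Z],X\rangle\bigr)$. A singular point $p$ is admissible if $\Gamma(V_1,V_2,V_3)(p)=0$ for all smooth vector fields $V_1,V_2,V_3$ with $V_3(p)\in\mathcal{N}_p$. A local coordinate system $(u,v)$ is adjusted at a singular point $p$ if $\partial/\partial v\in\mathcal{N}_p$. *)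

theory Defs
  imports "HOL-Analysis.Analysis"
begin

text \<open>Local coordinates (u,v) are points of real \<times> real; the point p is the origin (0,0).\<close>

definition dderiv :: "(real \<times> real \<Rightarrow> 'b::real_normed_vector) \<Rightarrow> real \<times> real \<Rightarrow> real \<times> real \<Rightarrow> 'b" where
  "dderiv f q w = frechet_derivative f (at q) w"

fun iter_deriv :: "(real \<times> real) list \<Rightarrow> (real \<times> real \<Rightarrow> 'b::real_normed_vector) \<Rightarrow> real \<times> real \<Rightarrow> 'b" where
  "iter_deriv [] f = f"
| "iter_deriv (w # ws) f = (\<lambda>q. dderiv (iter_deriv ws f) q w)"

definition smooth_on :: "(real \<times> real) set \<Rightarrow> (real \<times> real \<Rightarrow> 'b::real_normed_vector) \<Rightarrow> bool" where
  "smooth_on U f \<longleftrightarrow> (\<forall>ws. \<forall>q\<in>U. iter_deriv ws f differentiable (at q))"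

definition pd_u :: "(real \<times> real \<Rightarrow> real) \<Rightarrow> real \<times> real \<Rightarrow> real" where
  "pd_u f q = dderiv f q (1, 0)"
definition pd_v :: "(real \<times> real \<Rightarrow> real) \<Rightarrow> real \<times> real \<Rightarrow> real" where
  "pd_v f q = dderiv f q (0, 1)"

definition metric :: "(real \<times> real \<Rightarrow> real) \<Rightarrow> (real \<times> real \<Rightarrow> real) \<Rightarrow> (real \<times> real \<Rightarrow> real)
    \<Rightarrow> real \<times> real \<Rightarrow> real \<times> real \<Rightarrow> real \<times> real \<Rightarrow> real" where
  "metric E F G q a b = E q * fst a * fst b + F q * (fst a * snd b + snd a * fst b) + G q * snd a * snd b"

definition psd_metric_on where
  "psd_metric_on U E F G \<longleftrightarrow> (\<forall>q\<in>U. \<forall>w. metric E F G q w w \<ge> 0)"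

definition singular_at where
  "singular_at E F G q \<longleftrightarrow> \<not> (\<forall>w. w \<noteq> 0 \<longrightarrow> metric E F G q w w > 0)"

definition null_space :: "(real \<times> real \<Rightarrow> real) \<Rightarrow> (real \<times> real \<Rightarrow> real) \<Rightarrow> (real \<times> real \<Rightarrow> real)
    \<Rightarrow> real \<times> real \<Rightarrow> (real \<times> real) set" where
  "null_space E F G q = {w. \<forall>w'. metric E F G q w w' = 0}"

definition lie_bracket :: "(real \<times> real \<Rightarrow> real \<times> real) \<Rightarrow> (real \<times> real \<Rightarrow> real \<times> real) \<Rightarrow> real \<times> real \<Rightarrow> real \<times> real" where
  "lie_bracket X Y q = dderiv Y q (X q) - dderiv X q (Y q)"

definition inner_fun where
  "inner_fun E F G X Y = (\<lambda>q. metric E F G q (X q) (Y q))"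

definition kossowski where
  "kossowski E F G X Y Z q = (1/2) *
     ( dderiv (inner_fun E F G Y Z) q (X q) + dderiv (inner_fun E F G X Z) q (Y q)
     - dderiv (inner_fun E F G X Y) q (Z q)
     + metric E F G q (lie_bracket X Y q) (Z q) - metric E F G q (lie_bracket X Z q) (Y q)
     - metric E F G q (lie_bracket Y Z q) (X q))"

definition admissible_at where
  "admissible_at U E F G q \<longleftrightarrow> singular_at E F G q \<and>
     (\<forall>V1 V2 V3. smooth_on U V1 \<and> smooth_on U V2 \<and> smooth_on U V3 \<and> V3 q \<in> null_space E F G q
        \<longrightarrow> kossowski E F G V1 V2 V3 q = 0)"

definition adjusted_at where
  "adjusted_at E F G q \<longleftrightarrow> (0, 1) \<in> null_space E F G q"

end

theory Submission
  imports Defs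
begin

text \<open>
  Adjustedness says exactly that \<open>F\<close> and \<open>G\<close> vanish at \<open>p\<close>; since the null space is then
  one-dimensional, \<open>E p \<noteq> 0\<close> and the null space is spanned by \<open>\<partial>/\<partial>v\<close>. For a null \<open>Z\<close> at \<open>p\<close>,
  all terms of \<open>\<Gamma>(X,Y,Z)\<close> carrying an undifferentiated \<open>E\<close> cancel, and what remains is the
  bilinear form \<open>X\<^sub>1Y\<^sub>1(2F\<^sub>u - E\<^sub>v) + (X\<^sub>1Y\<^sub>2 + X\<^sub>2Y\<^sub>1)G\<^sub>u + X\<^sub>2Y\<^sub>2G\<^sub>v\<close> times \<open>Z\<^sub>2/2\<close>. It vanishes for all
  \<open>X, Y\<close> iff the three stated identities hold, and constant vector fields suffice to test this.
\<close>

lemma has_derivative_dderiv: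
  assumes "f differentiable (at q)"
  shows "(f has_derivative dderiv f q) (at q)"
  using assms unfolding dderiv_def by (simp add: frechet_derivative_works[symmetric])

lemma dderiv_eq_pd:
  assumes "f differentiable (at q)"
  shows "dderiv f q w = fst w * pd_u f q + snd w * pd_v f q"
proof -
  have l: "linear (dderiv f q)"
    using linear_frechet_derivative[OF assms] unfolding dderiv_def by (simp add: fun_eq_iff)
  have "w = fst w *\<^sub>R (1, 0) + snd w *\<^sub>R (0, 1)" by simp
  then have "dderiv f q w = dderiv f q (fst w *\<^sub>R (1, 0) + snd w *\<^sub>R (0, 1))" by simp
  also have "\<dots> = fst w * dderiv f q (1, 0) + snd w * dderiv f q (0, 1)"
    by (simp only: linear_add[OF l] linear_scale[OF l] real_scaleR_def)
  finally show ?thesis by (simp add: pd_u_def pd_v_def)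
qed

lemma dderiv_const [simp]: "dderiv (\<lambda>_. c) q w = 0"
  unfolding dderiv_def by (simp add: frechet_derivative_const)

lemma dderiv_inner_fun:
  assumes "E differentiable (at q)" "F differentiable (at q)" "G differentiable (at q)"
    and "Y differentiable (at q)" "Z differentiable (at q)"
  shows "dderiv (inner_fun E F G Y Z) q w =
     dderiv E q w * fst (Y q) * fst (Z q)
   + E q * (fst (dderiv Y q w) * fst (Z q) + fst (Y q) * fst (dderiv Z q w))
   + dderiv F q w * (fst (Y q) * snd (Z q) + snd (Y q) * fst (Z q))
   + F q * (fst (dderiv Y q w) * snd (Z q) + fst (Y q) * snd (dderiv Z q w)
            + snd (dderiv Y q w) * fst (Z q) + snd (Y q) * fst (dderiv Z q w))
   + dderiv G q w * snd (Y q) * snd (Z q)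
   + G q * (snd (dderiv Y q w) * snd (Z q) + snd (Y q) * snd (dderiv Z q w))"
proof -
  note d = assms[THEN has_derivative_dderiv]
  have "(inner_fun E F G Y Z has_derivative (\<lambda>w.
     dderiv E q w * fst (Y q) * fst (Z q)
   + E q * (fst (dderiv Y q w) * fst (Z q) + fst (Y q) * fst (dderiv Z q w))
   + dderiv F q w * (fst (Y q) * snd (Z q) + snd (Y q) * fst (Z q))
   + F q * (fst (dderiv Y q w) * snd (Z q) + fst (Y q) * snd (dderiv Z q w)
            + snd (dderiv Y q w) * fst (Z q) + snd (Y q) * fst (dderiv Z q w))
   + dderiv G q w * snd (Y q) * snd (Z q)
   + G q * (snd (dderiv Y q w) * snd (Z q) + snd (Y q) * snd (dderiv Z q w)))) (at q)"
    unfolding inner_fun_def metric_def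
    by (rule has_derivative_eq_rhs, (rule derivative_intros d)+) (simp add: fun_eq_iff algebra_simps)
  then show ?thesis
    unfolding dderiv_def by (simp add: frechet_derivative_at[symmetric])
qed

lemma smooth_on_const: "smooth_on U (\<lambda>_. c)"
proof -
  have "\<exists>k. iter_deriv ws (\<lambda>_. c) = (\<lambda>_. k)" for ws :: "(real \<times> real) list"
    by (induction ws) auto
  then show ?thesis
    unfolding smooth_on_def by (metis differentiable_const)
qed

lemma smooth_on_imp_differentiable: "smooth_on U f \<Longrightarrow> q \<in> U \<Longrightarrow> f differentiable (at q)"
  unfolding smooth_on_def by (metis iter_deriv.simps(1))

lemma adjusted_at_iff: "adjusted_at E F G q \<longleftrightarrow> F q = 0 \<and> G q = 0"
proof
  assume "adjusted_at E F G q"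
  then have "metric E F G q (0, 1) (1, 0) = 0" "metric E F G q (0, 1) (0, 1) = 0"
    unfolding adjusted_at_def null_space_def by auto
  then show "F q = 0 \<and> G q = 0" unfolding metric_def by simp
qed (simp add: adjusted_at_def null_space_def metric_def)

lemma null_space_adjusted:
  assumes "F q = 0" "G q = 0" "dim (null_space E F G q) = 1" "w \<in> null_space E F G q"
  shows "fst w = 0"
proof -
  have "E q \<noteq> 0"
  proof
    assume "E q = 0"
    then have "null_space E F G q = UNIV"
      using assms(1,2) unfolding null_space_def metric_def by simp
    then show False using assms(3) by (simp add: dim_UNIV DIM_prod)
  qed
  moreover have "metric E F G q w (1, 0) = 0"
    using assms(4) unfolding null_space_def by auto
  ultimately show ?thesis using assms(1) unfolding metric_def by simp
qed

lemma kossowski_null_direction: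
  assumes "E differentiable (at q)" "F differentiable (at q)" "G differentiable (at q)"
    and "X differentiable (at q)" "Y differentiable (at q)" "Z differentiable (at q)"
    and "F q = 0" "G q = 0" "Z q = (0, c)"
  shows "kossowski E F G X Y Z q = c / 2 *
     (fst (X q) * fst (Y q) * (2 * pd_u F q - pd_v E q)
    + (fst (X q) * snd (Y q) + snd (X q) * fst (Y q)) * pd_u G q
    + snd (X q) * snd (Y q) * pd_v G q)"
  unfolding kossowski_def lie_bracket_def
  using assms(7-9)
  by (simp add: dderiv_inner_fun assms(1-6) metric_def dderiv_eq_pd[OF assms(1)]
      dderiv_eq_pd[OF assms(2)] dderiv_eq_pd[OF assms(3)] algebra_simps)

theorem proposition2p7:
  fixes U :: "(real \<times> real) set" and E F G :: "real \<times> real \<Rightarrow> real"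
  assumes "open U" and "(0, 0) \<in> U"
    and "smooth_on U E" and "smooth_on U F" and "smooth_on U G"
    and "psd_metric_on U E F G"
    and "singular_at E F G (0, 0)"
    and "dim (null_space E F G (0, 0)) = 1"
  shows "(admissible_at U E F G (0, 0) \<and> adjusted_at E F G (0, 0)) \<longleftrightarrow>
         (F (0, 0) = 0 \<and> G (0, 0) = 0 \<and> pd_v E (0, 0) = 2 * pd_u F (0, 0)
          \<and> pd_u G (0, 0) = 0 \<and> pd_v G (0, 0) = 0)"
proof -
  note diff = smooth_on_imp_differentiable[OF _ assms(2)]
  note \<Gamma> = kossowski_null_direction[OF assms(3-5)[THEN diff]]
  have const_null: "(\<lambda>_. (0, 1)) (0, 0) \<in> null_space E F G (0, 0)" if "F (0, 0) = 0" "G (0, 0) = 0"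
    using that adjusted_at_iff unfolding adjusted_at_def by simp
  show ?thesis
  proof
    assume "admissible_at U E F G (0, 0) \<and> adjusted_at E F G (0, 0)"
    then have adm: "kossowski E F G (\<lambda>_. a) (\<lambda>_. b) (\<lambda>_. (0, 1)) (0, 0) = 0"
      and FG: "F (0, 0) = 0" "G (0, 0) = 0" for a b
      using const_null smooth_on_const unfolding admissible_at_def adjusted_at_iff by blast+
    show "F (0, 0) = 0 \<and> G (0, 0) = 0 \<and> pd_v E (0, 0) = 2 * pd_u F (0, 0)
          \<and> pd_u G (0, 0) = 0 \<and> pd_v G (0, 0) = 0"
      using adm[of "(1, 0)" "(1, 0)"] adm[of "(1, 0)" "(0, 1)"] adm[of "(0, 1)" "(0, 1)"]
      by (simp add: \<Gamma> FG)
  next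
    assume H: "F (0, 0) = 0 \<and> G (0, 0) = 0 \<and> pd_v E (0, 0) = 2 * pd_u F (0, 0)
          \<and> pd_u G (0, 0) = 0 \<and> pd_v G (0, 0) = 0"
    have "kossowski E F G V1 V2 V3 (0, 0) = 0"
      if "smooth_on U V1" "smooth_on U V2" "smooth_on U V3" "V3 (0, 0) \<in> null_space E F G (0, 0)"
      for V1 V2 V3
    proof -
      have "V3 (0, 0) = (0, snd (V3 (0, 0)))"
        using null_space_adjusted[OF _ _ assms(8) that(4)] H by (simp add: prod_eq_iff)
      then show ?thesis using H \<Gamma>[OF that(1-3)[THEN diff]] by simp
    qed
    then show "admissible_at U E F G (0, 0) \<and> adjusted_at E F G (0, 0)"
      using assms(7) H unfolding admissible_at_def adjusted_at_iff by blast
  qed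
qed

end
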